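(* Let $\mathscr T=(V,\mathcal E)$ be the directed Cartesian product of rooted directed trees $\mathscr T_1,\dots,\mathscr T_d$ and let $S_{\boldsymbol\lambda}=(S_1,\dots,S_d)$ be a commuting toral left invertible multishift on $\mathscr T$ with toral Cauchy dual $S^{\mathfrak t}_{\boldsymbol\lambda}$. Then $S^{\mathfrak t}_{\boldsymbol\lambda}$ is commuting if and only if there exist a toral isometry multishift $U_{\boldsymbol\theta}=(U_1,\dots,U_d)$ on $\mathscr T$ and a commuting $d$-tuple $D=(D_1,\dots,D_d)$ of diagonal, positive, invertible bounded operators on $l^2(V)$ such that $S_j=U_jD_j$ for $j=1,\dots,d$. Further, this decomposition is unique.
   Context: Directed trees: no loops or circuits, connected ignoring orientation, unique parent $\mathsf{par}(v)$ for vertices with incoming edges; rooted: unique parentless vertex $\mathsf{root}$; $\mathsf{Chi}(u)=\{v:(u,v)\in\mathcal E\}$; all leafless. Directed Cartesian product of rooted trees $\mathscr T_j=(V_j,\mathcal E_j)$: $V=V_1\times\dots\times V_d$ (countably infinite), $(v,w)\in\mathcal E$ iff for some $k$, $(v_k,w_k)\in\mathcal E_k$ and $w_j=v_j$ ($j\ne k$). $\mathsf{Chi}_j(v)=\{w:w_j\in\mathsf{Chi}(v_j),w_k=v_k\ (k\ne j)\}$. A multishift on $\mathscr T$ with positive weights $\lambda^{(j)}_v$ ($v\neq\mathsf{root}$) is the tuple $S_je_v=\sum_{w\in\mathsf{Chi}_j(v)}\lambda^{(j)}_we_w$ of bounded operators on $l^2(V)$. Toral left invertible: each $S_j^*S_j$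 invertible; toral Cauchy dual: $S^{\mathfrak t}_j=S_j(S_j^*S_j)^{-1}$. A toral isometry is a commuting tuple with $U_j^*U_j=I$ for all $j$. Diagonal means diagonal with respect to the basis $\{e_v\}_{v\in V}$. *)

theory Defs
  imports "HOL-Analysis.Analysis" "HOL-Library.FuncSet"
begin

definition rooted_directed_tree :: "'a set \<Rightarrow> ('a \<times> 'a) set \<Rightarrow> bool" where
  "rooted_directed_tree V E \<longleftrightarrow>
     E \<subseteq> V \<times> V \<and> V \<noteq> {} \<and>
     (\<forall>u. (u, u) \<notin> E\<^sup>+) \<and>                                   \<comment> \<open>no loops, no circuits\<close>
     (\<forall>u\<in>V. \<forall>v\<in>V. (u, v) \<in> (E \<union> E\<inverse>)\<^sup>*) \<and>            \<comment> \<open>connected ignoring orientation\<close>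
     (\<forall>v. (\<exists>u. (u, v) \<in> E) \<longrightarrow> (\<exists>!u. (u, v) \<in> E)) \<and>  \<comment> \<open>unique parent\<close>
     (\<exists>!r. r \<in> V \<and> \<not> (\<exists>u. (u, r) \<in> E))"

definition leafless :: "'a set \<Rightarrow> ('a \<times> 'a) set \<Rightarrow> bool" where
  "leafless V E \<longleftrightarrow> (\<forall>u\<in>V. \<exists>v. (u, v) \<in> E)"

definition tree_root :: "'a set \<Rightarrow> ('a \<times> 'a) set \<Rightarrow> 'a" where
  "tree_root V E = (THE r. r \<in> V \<and> \<not> (\<exists>u. (u, r) \<in> E))"

definition prod_vertices :: "nat \<Rightarrow> (nat \<Rightarrow> 'a set) \<Rightarrow> (nat \<Rightarrow> 'a) set" where
  "prod_vertices d Vt = PiE {..<d} Vt"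

definition prod_root :: "nat \<Rightarrow> (nat \<Rightarrow> 'a set) \<Rightarrow> (nat \<Rightarrow> ('a \<times> 'a) set) \<Rightarrow> (nat \<Rightarrow> 'a)" where
  "prod_root d Vt Et = restrict (\<lambda>j. tree_root (Vt j) (Et j)) {..<d}"

definition prod_child :: "nat \<Rightarrow> (nat \<Rightarrow> 'a set) \<Rightarrow> (nat \<Rightarrow> ('a \<times> 'a) set) \<Rightarrow> nat
     \<Rightarrow> (nat \<Rightarrow> 'a) \<Rightarrow> (nat \<Rightarrow> 'a) set" where
  "prod_child d Vt Et j v =
     {w \<in> prod_vertices d Vt. (v j, w j) \<in> Et j \<and> (\<forall>k<d. k \<noteq> j \<longrightarrow> w k = v k)}"

definition l2space :: "'v set \<Rightarrow> ('v \<Rightarrow> complex) set" where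
  "l2space V = {f. (\<forall>v. v \<notin> V \<longrightarrow> f v = 0) \<and> (\<lambda>v. (cmod (f v))\<^sup>2) summable_on V}"

definition l2inner :: "'v set \<Rightarrow> ('v \<Rightarrow> complex) \<Rightarrow> ('v \<Rightarrow> complex) \<Rightarrow> complex" where
  "l2inner V f g = infsum (\<lambda>v. cnj (f v) * g v) V"

definition l2norm :: "'v set \<Rightarrow> ('v \<Rightarrow> complex) \<Rightarrow> real" where
  "l2norm V f = sqrt (infsum (\<lambda>v. (cmod (f v))\<^sup>2) V)"

definition basis_vec :: "'v \<Rightarrow> 'v \<Rightarrow> complex" where
  "basis_vec v = (\<lambda>w. if w = v then 1 else 0)"

text \<open>Operators are HOL functions; only their action on l2space V matters.\<close>
definition bounded_op :: "'v set \<Rightarrow> (('v \<Rightarrow> complex) \<Rightarrow> ('v \<Rightarrow> complex)) \<Rightarrow> bool" where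
  "bounded_op V T \<longleftrightarrow>
     (\<forall>f\<in>l2space V. T f \<in> l2space V) \<and>
     (\<forall>f\<in>l2space V. \<forall>g\<in>l2space V. \<forall>a b.
        T (\<lambda>v. a * f v + b * g v) = (\<lambda>v. a * T f v + b * T g v)) \<and>
     (\<exists>C. \<forall>f\<in>l2space V. l2norm V (T f) \<le> C * l2norm V f)"

definition is_adjoint :: "'v set \<Rightarrow> (('v \<Rightarrow> complex) \<Rightarrow> ('v \<Rightarrow> complex))
     \<Rightarrow> (('v \<Rightarrow> complex) \<Rightarrow> ('v \<Rightarrow> complex)) \<Rightarrow> bool" where
  "is_adjoint V A B \<longleftrightarrow> bounded_op V B \<and>
     (\<forall>f\<in>l2space V. \<forall>g\<in>l2space V. l2inner V (B f) g = l2inner V f (A g))"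

definition is_inverse :: "'v set \<Rightarrow> (('v \<Rightarrow> complex) \<Rightarrow> ('v \<Rightarrow> complex))
     \<Rightarrow> (('v \<Rightarrow> complex) \<Rightarrow> ('v \<Rightarrow> complex)) \<Rightarrow> bool" where
  "is_inverse V A B \<longleftrightarrow> bounded_op V B \<and>
     (\<forall>f\<in>l2space V. A (B f) = f \<and> B (A f) = f)"

definition commuting_tuple :: "'v set \<Rightarrow> nat \<Rightarrow> (nat \<Rightarrow> ('v \<Rightarrow> complex) \<Rightarrow> ('v \<Rightarrow> complex)) \<Rightarrow> bool" where
  "commuting_tuple V d T \<longleftrightarrow>
     (\<forall>i<d. \<forall>j<d. \<forall>f\<in>l2space V. T i (T j f) = T j (T i f))"

definition is_multishift :: "nat \<Rightarrow> (nat \<Rightarrow> 'a set) \<Rightarrow> (nat \<Rightarrow> ('a \<times> 'a) set)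
     \<Rightarrow> (nat \<Rightarrow> (nat \<Rightarrow> 'a) \<Rightarrow> real)
     \<Rightarrow> (nat \<Rightarrow> ((nat \<Rightarrow> 'a) \<Rightarrow> complex) \<Rightarrow> ((nat \<Rightarrow> 'a) \<Rightarrow> complex)) \<Rightarrow> bool" where
  "is_multishift d Vt Et lam S \<longleftrightarrow>
     (\<forall>j<d. \<forall>w\<in>prod_vertices d Vt. w \<noteq> prod_root d Vt Et \<longrightarrow> lam j w > 0) \<and>
     (\<forall>j<d. bounded_op (prod_vertices d Vt) (S j) \<and>
        (\<forall>v\<in>prod_vertices d Vt. S j (basis_vec v) =
            (\<lambda>w. if w \<in> prod_child d Vt Et j v then complex_of_real (lam j w) else 0)))"

definition toral_isometry :: "'v set \<Rightarrow> nat \<Rightarrow> (nat \<Rightarrow> ('v \<Rightarrow> complex) \<Rightarrow> ('v \<Rightarrow> complex)) \<Rightarrow> bool" where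
  "toral_isometry V d U \<longleftrightarrow> commuting_tuple V d U \<and>
     (\<forall>j<d. \<exists>Ua. is_adjoint V (U j) Ua \<and> (\<forall>f\<in>l2space V. Ua (U j f) = f))"

definition diag_pos_inv :: "'v set \<Rightarrow> (('v \<Rightarrow> complex) \<Rightarrow> ('v \<Rightarrow> complex)) \<Rightarrow> bool" where
  "diag_pos_inv V D \<longleftrightarrow> bounded_op V D \<and>
     (\<exists>\<delta>. \<forall>v\<in>V. D (basis_vec v) = (\<lambda>w. \<delta> v * basis_vec v w)) \<and>
     (\<forall>f\<in>l2space V. Im (l2inner V f (D f)) = 0 \<and> Re (l2inner V f (D f)) \<ge> 0) \<and>
     (\<exists>Di. is_inverse V D Di)"

definition polar_decomp :: "nat \<Rightarrow> (nat \<Rightarrow> 'a set) \<Rightarrow> (nat \<Rightarrow> ('a \<times> 'a) set)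
     \<Rightarrow> (nat \<Rightarrow> ((nat \<Rightarrow> 'a) \<Rightarrow> complex) \<Rightarrow> ((nat \<Rightarrow> 'a) \<Rightarrow> complex))
     \<Rightarrow> (nat \<Rightarrow> ((nat \<Rightarrow> 'a) \<Rightarrow> complex) \<Rightarrow> ((nat \<Rightarrow> 'a) \<Rightarrow> complex))
     \<Rightarrow> (nat \<Rightarrow> (nat \<Rightarrow> 'a) \<Rightarrow> real)
     \<Rightarrow> (nat \<Rightarrow> ((nat \<Rightarrow> 'a) \<Rightarrow> complex) \<Rightarrow> ((nat \<Rightarrow> 'a) \<Rightarrow> complex)) \<Rightarrow> bool" where
  "polar_decomp d Vt Et S U \<theta> D \<longleftrightarrow>
     is_multishift d Vt Et \<theta> U \<and> toral_isometry (prod_vertices d Vt) d U \<and>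
     commuting_tuple (prod_vertices d Vt) d D \<and>
     (\<forall>j<d. diag_pos_inv (prod_vertices d Vt) (D j)) \<and>
     (\<forall>j<d. \<forall>f\<in>l2space (prod_vertices d Vt). S j f = U j (D j f))"

end

theory Submission
  imports Defs
begin

text \<open>
  Writing \<open>\<gamma>\<^sub>j(u) = \<parallel>S\<^sub>j e\<^sub>u\<parallel>\<^sup>2\<close>, the operator \<open>S\<^sub>j\<^sup>* S\<^sub>j\<close> is the diagonal operator
  \<open>diag(\<gamma>\<^sub>j)\<close>, and left invertibility bounds \<open>\<gamma>\<^sub>j\<close> away from \<open>0\<close> and \<open>\<infinity>\<close>. Hence the Cauchy
  dual is the weighted multishift \<open>S\<^sub>j diag(1/\<gamma>\<^sub>j)\<close>, and any decomposition \<open>S\<^sub>j = U\<^sub>j D\<^sub>j\<close> of the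
  required kind is forced to be \<open>D\<^sub>j = diag(\<surd>\<gamma>\<^sub>j)\<close>, \<open>U\<^sub>j = S\<^sub>j diag(1/\<surd>\<gamma>\<^sub>j)\<close>, which gives
  uniqueness. A tuple \<open>S\<^sub>j diag(m\<^sub>j)\<close> commutes iff
  \<open>m\<^sub>i(par\<^sub>i x) m\<^sub>j(par\<^sub>j par\<^sub>i x) = m\<^sub>j(par\<^sub>j x) m\<^sub>i(par\<^sub>i par\<^sub>j x)\<close> at every vertex with
  parents in both directions, because the corresponding identity for the weights \<open>\<lambda>\<close> is exactly the
  commutativity of \<open>S\<close>. For positive \<open>m\<close> this identity holds for \<open>m\<close> iff it holds for \<open>m\<^sup>2\<close>;
  with \<open>m\<^sub>j = 1/\<surd>\<gamma>\<^sub>j\<close> this says that the Cauchy dual commutes iff \<open>U\<close> does, i.e. iff the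
  decomposition exists.
\<close>

section \<open>Bounded and multiplication operators on \<open>l\<^sup>2(V)\<close>\<close>

lemma infsum_complex_of_real:
  "infsum (\<lambda>x. complex_of_real (f x)) A = of_real (infsum f A)"
proof (cases "f summable_on A")
  case True
  then show ?thesis by (intro infsumI has_sum_of_real) simp
next
  case False
  then have "\<not> (\<lambda>x. complex_of_real (f x)) summable_on A"
    using summable_on_Re by fastforce
  then show ?thesis using False by (simp add: infsum_not_exists)
qed

lemma infsum_eq_single:
  assumes "u \<in> V" "\<And>w. w \<in> V \<Longrightarrow> w \<noteq> u \<Longrightarrow> f w = 0"
  shows "infsum f V = (f u :: 'b::{comm_monoid_add,t2_space})"
proof -
  have "infsum f V = infsum f {u}"
    by (rule infsum_cong_neutral) (use assms in auto)
  then show ?thesis by simp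
qed

lemma l2space_outside: "f \<in> l2space V \<Longrightarrow> v \<notin> V \<Longrightarrow> f v = 0"
  by (simp add: l2space_def)

lemma basis_vec_in_l2space:
  assumes "v \<in> V"
  shows "basis_vec v \<in> l2space V"
proof -
  have "(\<lambda>w. (cmod (basis_vec v w))\<^sup>2) summable_on {v}" by simp
  then have "(\<lambda>w. (cmod (basis_vec v w))\<^sup>2) summable_on V"
    by (rule summable_on_cong_neutral[THEN iffD1, rotated -1]) (auto simp: basis_vec_def assms)
  then show ?thesis using assms by (auto simp: l2space_def basis_vec_def)
qed

lemma l2inner_basis_vec_left: "u \<in> V \<Longrightarrow> l2inner V (basis_vec u) h = h u"
  unfolding l2inner_def by (subst infsum_eq_single[of u]) (auto simp: basis_vec_def)

lemma l2inner_cnj_commute: "l2inner V f g = cnj (l2inner V g f)"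
  unfolding l2inner_def by (simp add: mult.commute flip: infsum_cnj)

lemma l2inner_scale_right: "l2inner V f (\<lambda>v. c * g v) = c * l2inner V f g"
  unfolding l2inner_def by (subst infsum_cmult_right'[symmetric]) (simp add: ac_simps)

lemma l2norm_nonneg: "l2norm V f \<ge> 0"
  by (simp add: l2norm_def infsum_nonneg)

lemma l2norm_basis_vec: "v \<in> V \<Longrightarrow> l2norm V (basis_vec v) = 1"
  unfolding l2norm_def by (subst infsum_eq_single[of v]) (auto simp: basis_vec_def)

lemma norm_le_l2norm:
  assumes "f \<in> l2space V" "u \<in> V"
  shows "cmod (f u) \<le> l2norm V f"
proof -
  have "(cmod (f u))\<^sup>2 = infsum (\<lambda>v. (cmod (f v))\<^sup>2) {u}" by simp
  also have "\<dots> \<le> infsum (\<lambda>v. (cmod (f v))\<^sup>2) V"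
    by (rule infsum_mono_neutral) (use assms in \<open>auto simp: l2space_def\<close>)
  finally show ?thesis
    unfolding l2norm_def using real_le_rsqrt by blast
qed

lemma bounded_op_l2space: "bounded_op V T \<Longrightarrow> f \<in> l2space V \<Longrightarrow> T f \<in> l2space V"
  by (simp add: bounded_op_def)

lemma bounded_op_scale:
  assumes "bounded_op V T" "f \<in> l2space V"
  shows "T (\<lambda>v. c * f v) = (\<lambda>v. c * T f v)"
proof -
  have "T (\<lambda>v. c * f v + 0 * f v) = (\<lambda>v. c * T f v + 0 * T f v)"
    using assms unfolding bounded_op_def by blast
  then show ?thesis by simp
qed

lemma bounded_op_norm_bound:
  assumes "bounded_op V T"
  obtains C where "C \<ge> 0" "\<And>f. f \<in> l2space V \<Longrightarrow> l2norm V (T f) \<le> C * l2norm V f"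
proof -
  obtain C where C: "\<forall>f\<in>l2space V. l2norm V (T f) \<le> C * l2norm V f"
    using assms unfolding bounded_op_def by blast
  have "l2norm V (T f) \<le> max C 0 * l2norm V f" if "f \<in> l2space V" for f
    using C that l2norm_nonneg[of V f] by (meson max.cobounded1 mult_right_mono order_trans)
  with that[of "max C 0"] show thesis by simp
qed

lemma bounded_op_comp:
  assumes "bounded_op V A" "bounded_op V B"
  shows "bounded_op V (\<lambda>f. A (B f))"
proof -
  obtain CA where CA: "CA \<ge> 0" "\<And>f. f \<in> l2space V \<Longrightarrow> l2norm V (A f) \<le> CA * l2norm V f"
    using bounded_op_norm_bound[OF assms(1)] by blast
  obtain CB where CB: "\<And>f. f \<in> l2space V \<Longrightarrow> l2norm V (B f) \<le> CB * l2norm V f"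
    using bounded_op_norm_bound[OF assms(2)] by blast
  have "l2norm V (A (B f)) \<le> (CA * CB) * l2norm V f" if f: "f \<in> l2space V" for f
  proof -
    have "l2norm V (A (B f)) \<le> CA * l2norm V (B f)"
      using CA(2) bounded_op_l2space[OF assms(2) f] .
    also have "\<dots> \<le> CA * (CB * l2norm V f)" using CB[OF f] CA(1) by (rule mult_left_mono)
    finally show ?thesis by simp
  qed
  then show ?thesis using assms unfolding bounded_op_def by auto
qed

lemma commuting_tuple_cong:
  assumes "\<And>j f. j < d \<Longrightarrow> f \<in> l2space V \<Longrightarrow> T j f = T' j f"
    and "\<And>j f. j < d \<Longrightarrow> f \<in> l2space V \<Longrightarrow> T j f \<in> l2space V"
  shows "commuting_tuple V d T \<longleftrightarrow> commuting_tuple V d T'"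
  using assms unfolding commuting_tuple_def by simp

definition mult_op :: "('v \<Rightarrow> real) \<Rightarrow> ('v \<Rightarrow> complex) \<Rightarrow> ('v \<Rightarrow> complex)" where
  "mult_op m f = (\<lambda>v. complex_of_real (m v) * f v)"

lemma mult_op_l2space:
  assumes f: "f \<in> l2space V" and M: "\<And>v. v \<in> V \<Longrightarrow> \<bar>m v\<bar> \<le> M"
  shows "mult_op m f \<in> l2space V" and "l2norm V (mult_op m f) \<le> M * l2norm V f"
proof -
  have sum_f: "(\<lambda>v. (cmod (f v))\<^sup>2) summable_on V" using f by (simp add: l2space_def)
  have le: "(cmod (mult_op m f v))\<^sup>2 \<le> M\<^sup>2 * (cmod (f v))\<^sup>2" if "v \<in> V" for v
  proof -
    have "cmod (mult_op m f v) \<le> M * cmod (f v)"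
      using M[OF that] by (simp add: mult_op_def norm_mult mult_right_mono)
    then show ?thesis by (metis norm_ge_zero power_mono power_mult_distrib)
  qed
  have sum_Mf: "(\<lambda>v. M\<^sup>2 * (cmod (f v))\<^sup>2) summable_on V"
    using sum_f by (rule summable_on_cmult_right)
  have sum_mf: "(\<lambda>v. (cmod (mult_op m f v))\<^sup>2) summable_on V"
    by (rule summable_on_comparison_test[OF sum_Mf]) (use le in auto)
  show "mult_op m f \<in> l2space V" using f sum_mf by (auto simp: l2space_def mult_op_def)
  show "l2norm V (mult_op m f) \<le> M * l2norm V f"
  proof (cases "V = {}")
    case True then show ?thesis by (simp add: l2norm_def)
  next
    case False
    then have "M \<ge> 0" using M by force
    have "infsum (\<lambda>v. (cmod (mult_op m f v))\<^sup>2) V \<le> M\<^sup>2 * infsum (\<lambda>v. (cmod (f v))\<^sup>2) V"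
      using infsum_mono[OF sum_mf sum_Mf] le by (simp add: infsum_cmult_right')
    then have "l2norm V (mult_op m f) \<le> sqrt (M\<^sup>2 * infsum (\<lambda>v. (cmod (f v))\<^sup>2) V)"
      unfolding l2norm_def using real_sqrt_le_mono by blast
    also have "\<dots> = M * l2norm V f" using \<open>M \<ge> 0\<close> by (simp add: l2norm_def real_sqrt_mult)
    finally show ?thesis .
  qed
qed

lemma bounded_op_mult_op:
  assumes "\<And>v. v \<in> V \<Longrightarrow> \<bar>m v\<bar> \<le> M"
  shows "bounded_op V (mult_op m)"
proof -
  have "mult_op m f \<in> l2space V" if "f \<in> l2space V" for f
    by (rule mult_op_l2space(1)[OF that]) (rule assms)
  moreover have "l2norm V (mult_op m f) \<le> M * l2norm V f" if "f \<in> l2space V" for f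
    by (rule mult_op_l2space(2)[OF that]) (rule assms)
  moreover have "mult_op m (\<lambda>v. a * f v + b * g v) = (\<lambda>v. a * mult_op m f v + b * mult_op m g v)"
    for f g a b
    by (simp add: mult_op_def algebra_simps)
  ultimately show ?thesis
    unfolding bounded_op_def by blast
qed

lemma mult_op_mult_op: "mult_op m (mult_op n f) = mult_op (\<lambda>v. m v * n v) f"
  by (simp add: mult_op_def mult.assoc)

lemma mult_op_one:
  assumes "\<And>v. v \<in> V \<Longrightarrow> m v = 1" "f \<in> l2space V"
  shows "mult_op m f = f"
proof
  fix v show "mult_op m f v = f v"
    using assms l2space_outside[OF assms(2), of v] by (cases "v \<in> V") (auto simp: mult_op_def)
qed

lemma l2inner_mult_op: "l2inner V (mult_op m f) g = l2inner V f (mult_op m g)"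
  unfolding l2inner_def mult_op_def by (simp add: ac_simps)

lemma l2inner_mult_op_nonneg:
  assumes "\<And>v. v \<in> V \<Longrightarrow> m v \<ge> 0"
  shows "Im (l2inner V f (mult_op m f)) = 0 \<and> Re (l2inner V f (mult_op m f)) \<ge> 0"
proof -
  have pointwise: "cnj (f v) * (complex_of_real (m v) * f v) = complex_of_real (m v * (cmod (f v))\<^sup>2)" for v
  proof -
    have "cnj (f v) * f v = complex_of_real ((cmod (f v))\<^sup>2)"
      using complex_norm_square[of "f v"] by (simp add: ac_simps)
    have "cnj (f v) * (complex_of_real (m v) * f v) = complex_of_real (m v) * (cnj (f v) * f v)"
      by (simp only: ac_simps)
    also have "\<dots> = complex_of_real (m v * (cmod (f v))\<^sup>2)"
      by (simp only: \<open>cnj (f v) * f v = _\<close> of_real_mult)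
    finally show ?thesis .
  qed
  have "l2inner V f (mult_op m f) = of_real (infsum (\<lambda>v. m v * (cmod (f v))\<^sup>2) V)"
    unfolding l2inner_def mult_op_def pointwise infsum_complex_of_real ..
  moreover have "infsum (\<lambda>v. m v * (cmod (f v))\<^sup>2) V \<ge> 0"
    by (rule infsum_nonneg) (use assms in simp)
  ultimately show ?thesis by simp
qed

section \<open>Directed Cartesian products of rooted trees\<close>

locale tree_product =
  fixes d :: nat and Vt :: "nat \<Rightarrow> 'a set" and Et :: "nat \<Rightarrow> ('a \<times> 'a) set"
  assumes rooted_trees: "\<And>j. j < d \<Longrightarrow> rooted_directed_tree (Vt j) (Et j)"
begin

abbreviation V where "V \<equiv> prod_vertices d Vt"

definition parent :: "nat \<Rightarrow> 'a \<Rightarrow> 'a" where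
  "parent j a = (THE u. (u, a) \<in> Et j)"

definition has_parent :: "nat \<Rightarrow> (nat \<Rightarrow> 'a) \<Rightarrow> bool" where
  "has_parent j x \<longleftrightarrow> (\<exists>u. (u, x j) \<in> Et j)"

definition par :: "nat \<Rightarrow> (nat \<Rightarrow> 'a) \<Rightarrow> (nat \<Rightarrow> 'a)" where
  "par j x = x(j := parent j (x j))"

lemma parent_eq:
  assumes "j < d" "(u, a) \<in> Et j"
  shows "parent j a = u"
proof -
  have "\<exists>!u. (u, a) \<in> Et j"
    using rooted_trees[OF assms(1)] assms(2) unfolding rooted_directed_tree_def by blast
  then show ?thesis unfolding parent_def using assms(2) by (metis the_equality)
qed

lemma parent_edge:
  assumes "j < d" "has_parent j x"
  shows "(parent j (x j), x j) \<in> Et j"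
proof -
  obtain u where "(u, x j) \<in> Et j" using assms(2) has_parent_def by blast
  with parent_eq[OF assms(1) this] show ?thesis by simp
qed

lemma par_in_V:
  assumes "j < d" "x \<in> V" "has_parent j x"
  shows "par j x \<in> V"
proof -
  have "parent j (x j) \<in> Vt j"
    using rooted_trees[OF assms(1)] parent_edge[OF assms(1,3)]
    unfolding rooted_directed_tree_def by blast
  then show ?thesis
    using assms(1,2) unfolding prod_vertices_def par_def by (auto simp: PiE_iff extensional_def)
qed

lemma par_commute: "i \<noteq> j \<Longrightarrow> par j (par i x) = par i (par j x)"
  by (auto simp: par_def fun_upd_twist)

lemma has_parent_par: "i \<noteq> j \<Longrightarrow> has_parent j (par i x) \<longleftrightarrow> has_parent j x"
  by (simp add: has_parent_def par_def)

lemma prod_child_iff: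
  assumes j: "j < d" and p: "p \<in> V"
  shows "x \<in> prod_child d Vt Et j p \<longleftrightarrow> x \<in> V \<and> has_parent j x \<and> p = par j x"
proof
  assume "x \<in> prod_child d Vt Et j p"
  then have x: "x \<in> V" and e: "(p j, x j) \<in> Et j" and other: "\<forall>k<d. k \<noteq> j \<longrightarrow> x k = p k"
    unfolding prod_child_def by auto
  have "p k = par j x k" for k
  proof (cases "k < d")
    case True
    then show ?thesis using other parent_eq[OF j e] by (auto simp: par_def)
  next
    case False
    then show ?thesis
      using p x j unfolding prod_vertices_def by (auto simp: par_def PiE_iff extensional_def)
  qed
  then show "x \<in> V \<and> has_parent j x \<and> p = par j x"
    using x e by (auto simp: has_parent_def)
next
  assume "x \<in> V \<and> has_parent j x \<and> p = par j x"
  then show "x \<in> prod_child d Vt Et j p"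
    unfolding prod_child_def using parent_edge[OF j] by (auto simp: par_def)
qed

lemma has_parent_not_root:
  assumes j: "j < d" and "has_parent j x"
  shows "x \<noteq> prod_root d Vt Et"
proof
  assume "x = prod_root d Vt Et"
  then have "x j = tree_root (Vt j) (Et j)" using j by (simp add: prod_root_def)
  moreover have "\<exists>!r. r \<in> Vt j \<and> \<not> (\<exists>u. (u, r) \<in> Et j)"
    using rooted_trees[OF j] unfolding rooted_directed_tree_def by blast
  then have "tree_root (Vt j) (Et j) \<in> Vt j \<and> \<not> (\<exists>u. (u, tree_root (Vt j) (Et j)) \<in> Et j)"
    unfolding tree_root_def by (rule theI')
  ultimately show False using assms(2) by (simp add: has_parent_def)
qed

end

section \<open>Commuting left invertible multishifts\<close>

locale commuting_multishift = tree_product +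
  fixes lam :: "nat \<Rightarrow> (nat \<Rightarrow> 'a) \<Rightarrow> real"
    and S Sa Inv :: "nat \<Rightarrow> ((nat \<Rightarrow> 'a) \<Rightarrow> complex) \<Rightarrow> ((nat \<Rightarrow> 'a) \<Rightarrow> complex)"
  assumes multishift: "is_multishift d Vt Et lam S"
    and commuting: "commuting_tuple (prod_vertices d Vt) d S"
    and adjoint: "\<And>j. j < d \<Longrightarrow> is_adjoint (prod_vertices d Vt) (S j) (Sa j)"
    and inverse: "\<And>j. j < d \<Longrightarrow> is_inverse (prod_vertices d Vt) (\<lambda>f. Sa j (S j f)) (Inv j)"
begin

lemma lam_pos: "j < d \<Longrightarrow> x \<in> V \<Longrightarrow> has_parent j x \<Longrightarrow> lam j x > 0"
  using multishift has_parent_not_root unfolding is_multishift_def by blast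

lemma bounded_op_S: "j < d \<Longrightarrow> bounded_op V (S j)"
  using multishift unfolding is_multishift_def by blast

lemma bounded_op_Sa: "j < d \<Longrightarrow> bounded_op V (Sa j)"
  using adjoint unfolding is_adjoint_def by blast

lemma bounded_op_Inv: "j < d \<Longrightarrow> bounded_op V (Inv j)"
  using inverse unfolding is_inverse_def by blast

lemma l2inner_Sa:
  "j < d \<Longrightarrow> f \<in> l2space V \<Longrightarrow> g \<in> l2space V \<Longrightarrow> l2inner V (Sa j f) g = l2inner V f (S j g)"
  using adjoint unfolding is_adjoint_def by blast

lemma S_basis_vec:
  assumes "j < d" "v \<in> V"
  shows "S j (basis_vec v) =
    (\<lambda>w. if w \<in> V \<and> has_parent j w \<and> v = par j w then complex_of_real (lam j w) else 0)"
  using multishift assms prod_child_iff[OF assms] unfolding is_multishift_def by simp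

lemma Sa_basis_vec:
  assumes j: "j < d" and x: "x \<in> V"
  shows "Sa j (basis_vec x) =
    (\<lambda>u. if has_parent j x \<and> u = par j x then complex_of_real (lam j x) else 0)"
proof
  fix u
  show "Sa j (basis_vec x) u = (if has_parent j x \<and> u = par j x then complex_of_real (lam j x) else 0)"
  proof (cases "u \<in> V")
    case True
    have "Sa j (basis_vec x) u = l2inner V (basis_vec u) (Sa j (basis_vec x))"
      by (simp add: l2inner_basis_vec_left[OF True])
    also have "\<dots> = cnj (l2inner V (Sa j (basis_vec x)) (basis_vec u))"
      by (rule l2inner_cnj_commute)
    also have "\<dots> = cnj (S j (basis_vec u) x)"
      using l2inner_Sa[OF j basis_vec_in_l2space[OF x] basis_vec_in_l2space[OF True]]
        l2inner_basis_vec_left[OF x] by simp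
    finally show ?thesis using S_basis_vec[OF j True] x by auto
  next
    case False
    then show ?thesis
      using l2space_outside[OF bounded_op_l2space[OF bounded_op_Sa[OF j] basis_vec_in_l2space[OF x]]]
        par_in_V[OF j x] by auto
  qed
qed

lemma S_apply:
  assumes j: "j < d" and g: "g \<in> l2space V"
  shows "S j g x = (if x \<in> V \<and> has_parent j x then complex_of_real (lam j x) * g (par j x) else 0)"
proof (cases "x \<in> V")
  case False
  then show ?thesis using l2space_outside[OF bounded_op_l2space[OF bounded_op_S[OF j] g]] by simp
next
  case x: True
  have "S j g x = l2inner V (Sa j (basis_vec x)) g"
    using l2inner_basis_vec_left[OF x] l2inner_Sa[OF j basis_vec_in_l2space[OF x] g] by simp
  also have "\<dots> = (if has_parent j x then complex_of_real (lam j x) * g (par j x) else 0)"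
    unfolding l2inner_def Sa_basis_vec[OF j x]
    by (cases "has_parent j x") (auto simp: infsum_eq_single[OF par_in_V[OF j x]])
  finally show ?thesis using x by simp
qed

definition gram :: "nat \<Rightarrow> (nat \<Rightarrow> 'a) \<Rightarrow> real" where
  "gram j u = infsum (\<lambda>w. (cmod (S j (basis_vec u) w))\<^sup>2) V"

lemma gram_nonneg: "gram j u \<ge> 0"
  unfolding gram_def by (simp add: infsum_nonneg)

lemma gram_eq_l2norm: "gram j u = (l2norm V (S j (basis_vec u)))\<^sup>2"
  unfolding gram_def l2norm_def by (simp add: infsum_nonneg)

text \<open>Each coordinate of \<open>S j h\<close> reads off a single coordinate of \<open>h\<close>, so \<open>S\<^sub>j\<^sup>* S\<^sub>j\<close> is diagonal.\<close>

lemma l2inner_S_S_basis_vec: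
  assumes j: "j < d" and h: "h \<in> l2space V" and u: "u \<in> V"
  shows "l2inner V (S j h) (S j (basis_vec u)) = complex_of_real (gram j u) * cnj (h u)"
proof -
  have "cnj (S j h w) * S j (basis_vec u) w
      = complex_of_real ((cmod (S j (basis_vec u) w))\<^sup>2) * cnj (h u)" for w
    using S_apply[OF j h, of w] S_basis_vec[OF j u] lam_pos[OF j, of w]
    by (cases "w \<in> V \<and> has_parent j w \<and> u = par j w") (auto simp: power2_eq_square)
  then have "l2inner V (S j h) (S j (basis_vec u))
      = infsum (\<lambda>w. complex_of_real ((cmod (S j (basis_vec u) w))\<^sup>2)) V * cnj (h u)"
    unfolding l2inner_def by (simp add: infsum_cmult_left')
  then show ?thesis unfolding gram_def infsum_complex_of_real .
qed

lemma Sa_S_apply: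
  assumes j: "j < d" and h: "h \<in> l2space V" and u: "u \<in> V"
  shows "Sa j (S j h) u = complex_of_real (gram j u) * h u"
proof -
  have "Sa j (S j h) u = l2inner V (basis_vec u) (Sa j (S j h))"
    by (simp add: l2inner_basis_vec_left[OF u])
  also have "\<dots> = cnj (l2inner V (Sa j (S j h)) (basis_vec u))"
    by (rule l2inner_cnj_commute)
  also have "\<dots> = cnj (l2inner V (S j h) (S j (basis_vec u)))"
    using l2inner_Sa[OF j bounded_op_l2space[OF bounded_op_S[OF j] h] basis_vec_in_l2space[OF u]]
    by simp
  finally show ?thesis using l2inner_S_S_basis_vec[OF j h u] by simp
qed

lemma gram_mult_Inv_apply:
  assumes j: "j < d" and f: "f \<in> l2space V" and u: "u \<in> V"
  shows "complex_of_real (gram j u) * Inv j f u = f u"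
proof -
  have "Sa j (S j (Inv j f)) = f" using inverse[OF j] f unfolding is_inverse_def by blast
  then show ?thesis using Sa_S_apply[OF j bounded_op_l2space[OF bounded_op_Inv[OF j] f] u] by simp
qed

lemma gram_pos:
  assumes j: "j < d" and u: "u \<in> V"
  shows "gram j u > 0"
proof -
  have "complex_of_real (gram j u) * Inv j (basis_vec u) u = 1"
    using gram_mult_Inv_apply[OF j basis_vec_in_l2space[OF u] u] by (simp add: basis_vec_def)
  then have "gram j u \<noteq> 0" by auto
  then show ?thesis using gram_nonneg[of j u] by simp
qed

lemma Inv_eq_mult_op:
  assumes j: "j < d" and f: "f \<in> l2space V"
  shows "Inv j f = mult_op (\<lambda>v. 1 / gram j v) f"
proof
  fix v
  show "Inv j f v = mult_op (\<lambda>v. 1 / gram j v) f v"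
  proof (cases "v \<in> V")
    case True
    then show ?thesis using gram_mult_Inv_apply[OF j f True] gram_pos[OF j True]
      by (simp add: mult_op_def field_simps)
  next
    case False
    then show ?thesis
      using l2space_outside[OF bounded_op_l2space[OF bounded_op_Inv[OF j] f]] l2space_outside[OF f]
      by (simp add: mult_op_def)
  qed
qed

lemma gram_bounds:
  assumes j: "j < d"
  obtains a b where "a > 0" "\<And>u. u \<in> V \<Longrightarrow> a \<le> gram j u \<and> gram j u \<le> b"
proof -
  obtain C where C: "\<And>f. f \<in> l2space V \<Longrightarrow> l2norm V (S j f) \<le> C * l2norm V f"
    using bounded_op_norm_bound[OF bounded_op_S[OF j]] by blast
  obtain K where K: "K \<ge> 0" "\<And>f. f \<in> l2space V \<Longrightarrow> l2norm V (Inv j f) \<le> K * l2norm V f"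
    using bounded_op_norm_bound[OF bounded_op_Inv[OF j]] by blast
  have "1 / (K + 1) \<le> gram j u \<and> gram j u \<le> C\<^sup>2" if u: "u \<in> V" for u
  proof
    have e: "basis_vec u \<in> l2space V" "l2norm V (basis_vec u) = 1"
      using basis_vec_in_l2space[OF u] l2norm_basis_vec[OF u] by auto
    have "1 / gram j u = cmod (Inv j (basis_vec u) u)"
      using Inv_eq_mult_op[OF j e(1)] gram_pos[OF j u] by (simp add: mult_op_def basis_vec_def norm_divide)
    also have "\<dots> \<le> K"
      using norm_le_l2norm[OF bounded_op_l2space[OF bounded_op_Inv[OF j] e(1)] u] K(2)[OF e(1)] e(2)
      by simp
    finally show "1 / (K + 1) \<le> gram j u"
      using gram_pos[OF j u] K(1) by (simp add: field_simps)
    show "gram j u \<le> C\<^sup>2"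
      unfolding gram_eq_l2norm using C[OF e(1)] e(2)
      by (intro power_mono) (simp_all add: l2norm_nonneg)
  qed
  then show thesis using that[of "1 / (K + 1)" "C\<^sup>2"] K(1) by simp
qed

section \<open>Weighted multishifts\<close>

definition weighted_shift ::
    "(nat \<Rightarrow> (nat \<Rightarrow> 'a) \<Rightarrow> real) \<Rightarrow> nat \<Rightarrow> ((nat \<Rightarrow> 'a) \<Rightarrow> complex) \<Rightarrow> ((nat \<Rightarrow> 'a) \<Rightarrow> complex)"
  where "weighted_shift m j f = S j (mult_op (m j) f)"

definition bounded_weights :: "(nat \<Rightarrow> (nat \<Rightarrow> 'a) \<Rightarrow> real) \<Rightarrow> bool" where
  "bounded_weights m \<longleftrightarrow> (\<forall>j<d. \<exists>M. \<forall>v\<in>V. \<bar>m j v\<bar> \<le> M)"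

definition weight_cocycle :: "(nat \<Rightarrow> (nat \<Rightarrow> 'a) \<Rightarrow> real) \<Rightarrow> bool" where
  "weight_cocycle m \<longleftrightarrow> (\<forall>i<d. \<forall>j<d. i \<noteq> j \<longrightarrow> (\<forall>x\<in>V. has_parent i x \<longrightarrow> has_parent j x \<longrightarrow>
      m i (par i x) * m j (par j (par i x)) = m j (par j x) * m i (par i (par j x))))"

lemma bounded_op_mult_op_weights:
  assumes "bounded_weights m" "j < d"
  shows "bounded_op V (mult_op (m j))"
proof -
  obtain M where "\<And>v. v \<in> V \<Longrightarrow> \<bar>m j v\<bar> \<le> M"
    using assms unfolding bounded_weights_def by blast
  then show ?thesis by (rule bounded_op_mult_op)
qed

lemma mult_op_l2space_bounded_weights:
  "bounded_weights m \<Longrightarrow> j < d \<Longrightarrow> f \<in> l2space V \<Longrightarrow> mult_op (m j) f \<in> l2space V"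
  by (rule bounded_op_l2space[OF bounded_op_mult_op_weights])

lemma weighted_shift_l2space:
  "bounded_weights m \<Longrightarrow> j < d \<Longrightarrow> f \<in> l2space V \<Longrightarrow> weighted_shift m j f \<in> l2space V"
  unfolding weighted_shift_def
  by (intro bounded_op_l2space[OF bounded_op_S] mult_op_l2space_bounded_weights)

lemma weighted_shift_apply:
  assumes "bounded_weights m" "j < d" "f \<in> l2space V"
  shows "weighted_shift m j f x = (if x \<in> V \<and> has_parent j x
    then complex_of_real (lam j x * m j (par j x)) * f (par j x) else 0)"
  unfolding weighted_shift_def S_apply[OF assms(2) mult_op_l2space_bounded_weights[OF assms]]
  by (simp add: mult_op_def)

lemma weighted_shift_weighted_shift_apply:
  assumes m: "bounded_weights m" and i: "i < d" and j: "j < d" and ij: "i \<noteq> j"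
    and f: "f \<in> l2space V"
  shows "weighted_shift m i (weighted_shift m j f) x =
    (if x \<in> V \<and> has_parent i x \<and> has_parent j x
     then complex_of_real (lam i x * lam j (par i x) * (m i (par i x) * m j (par j (par i x))))
       * f (par j (par i x))
     else 0)"
  using weighted_shift_apply[OF m i weighted_shift_l2space[OF m j f], of x]
    weighted_shift_apply[OF m j f, of "par i x"] par_in_V[OF i, of x] has_parent_par[OF ij, of x]
  by (auto simp: algebra_simps)

lemma commuting_weighted_shift_coefficients:
  assumes c: "commuting_tuple V d (weighted_shift m)" and m: "bounded_weights m"
    and i: "i < d" and j: "j < d" and ij: "i \<noteq> j"
    and x: "x \<in> V" and hi: "has_parent i x" and hj: "has_parent j x"
  shows "lam i x * lam j (par i x) * (m i (par i x) * m j (par j (par i x)))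
       = lam j x * lam i (par j x) * (m j (par j x) * m i (par i (par j x)))"
proof -
  let ?q = "par j (par i x)"
  have e: "basis_vec ?q \<in> l2space V"
    using par_in_V[OF j par_in_V[OF i x hi]] has_parent_par[OF ij] hj basis_vec_in_l2space by simp
  have "weighted_shift m i (weighted_shift m j (basis_vec ?q)) x
      = weighted_shift m j (weighted_shift m i (basis_vec ?q)) x"
    using c i j e unfolding commuting_tuple_def by metis
  then show ?thesis
    unfolding weighted_shift_weighted_shift_apply[OF m i j ij e]
      weighted_shift_weighted_shift_apply[OF m j i ij[symmetric] e]
    using x hi hj par_commute[OF ij] by (simp add: basis_vec_def flip: of_real_mult)
qed

lemma bounded_weights_one: "bounded_weights (\<lambda>_ _. 1)"
  unfolding bounded_weights_def by auto

lemma weighted_shift_one: "weighted_shift (\<lambda>_ _. 1) j f = S j f"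
  by (simp add: weighted_shift_def mult_op_def)

text \<open>Commutativity of \<open>S\<close> itself, read off at a vertex with two parents.\<close>

lemma lam_cocycle:
  assumes "i < d" "j < d" "i \<noteq> j" "x \<in> V" "has_parent i x" "has_parent j x"
  shows "lam i x * lam j (par i x) = lam j x * lam i (par j x)"
proof -
  have "commuting_tuple V d (weighted_shift (\<lambda>_ _. 1))"
    using commuting unfolding commuting_tuple_def by (simp add: weighted_shift_one)
  from commuting_weighted_shift_coefficients[OF this bounded_weights_one assms] show ?thesis
    by simp
qed

lemma commuting_weighted_shift_iff:
  assumes m: "bounded_weights m"
  shows "commuting_tuple V d (weighted_shift m) \<longleftrightarrow> weight_cocycle m"
proof
  assume c: "commuting_tuple V d (weighted_shift m)"
  show "weight_cocycle m"
    unfolding weight_cocycle_def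
  proof (intro allI impI ballI)
    fix i j x assume i: "i < d" and j: "j < d" and ij: "i \<noteq> j" and x: "x \<in> V"
      and hi: "has_parent i x" and hj: "has_parent j x"
    have "lam i x * lam j (par i x) \<noteq> 0"
      using lam_pos[OF i x hi] lam_pos[OF j par_in_V[OF i x hi]] has_parent_par[OF ij] hj by simp
    moreover have "lam i x * lam j (par i x) * (m i (par i x) * m j (par j (par i x)))
        = lam i x * lam j (par i x) * (m j (par j x) * m i (par i (par j x)))"
      using commuting_weighted_shift_coefficients[OF c m i j ij x hi hj]
      unfolding lam_cocycle[OF i j ij x hi hj] .
    ultimately show "m i (par i x) * m j (par j (par i x)) = m j (par j x) * m i (par i (par j x))"
      by simp
  qed
next
  assume cocycle: "weight_cocycle m"
  show "commuting_tuple V d (weighted_shift m)"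
    unfolding commuting_tuple_def
  proof (intro allI impI ballI ext)
    fix i j f x assume i: "i < d" and j: "j < d" and f: "f \<in> l2space V"
    show "weighted_shift m i (weighted_shift m j f) x = weighted_shift m j (weighted_shift m i f) x"
    proof (cases "i = j")
      case False
      then show ?thesis
        unfolding weighted_shift_weighted_shift_apply[OF m i j False f]
          weighted_shift_weighted_shift_apply[OF m j i not_sym[OF False] f]
        using cocycle lam_cocycle[OF i j False] par_commute[OF False] i j
        unfolding weight_cocycle_def by (auto simp: conj_commute)
    qed simp
  qed
qed

lemma weight_cocycle_power2_iff:
  assumes "\<And>j v. j < d \<Longrightarrow> v \<in> V \<Longrightarrow> m j v > 0"
  shows "weight_cocycle (\<lambda>j v. (m j v)\<^sup>2) \<longleftrightarrow> weight_cocycle m"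
proof -
  have "((m i (par i x))\<^sup>2 * (m j (par j (par i x)))\<^sup>2 = (m j (par j x))\<^sup>2 * (m i (par i (par j x)))\<^sup>2)
      \<longleftrightarrow> m i (par i x) * m j (par j (par i x)) = m j (par j x) * m i (par i (par j x))"
    if "i < d" "j < d" "i \<noteq> j" "x \<in> V" "has_parent i x" "has_parent j x" for i j x
  proof -
    have "par j (par i x) \<in> V" "par i (par j x) \<in> V"
      using that par_in_V has_parent_par par_commute by metis+
    then have "0 \<le> m i (par i x) * m j (par j (par i x))" "0 \<le> m j (par j x) * m i (par i (par j x))"
      using that assms par_in_V by (simp_all add: less_imp_le)
    then show ?thesis by (simp flip: power_mult_distrib)
  qed
  then show ?thesis unfolding weight_cocycle_def by (metis (no_types, lifting))
qed

lemma bounded_weights_inverse_gram: "bounded_weights (\<lambda>j v. 1 / gram j v)"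
  unfolding bounded_weights_def
proof (intro allI impI)
  fix j assume "j < d"
  then obtain a b where a: "a > 0" and ab: "\<And>u. u \<in> V \<Longrightarrow> a \<le> gram j u \<and> gram j u \<le> b"
    using gram_bounds by blast
  have "\<bar>1 / gram j v\<bar> \<le> 1 / a" if "v \<in> V" for v
    using a ab[OF that] by (simp add: frac_le)
  then show "\<exists>M. \<forall>v\<in>V. \<bar>1 / gram j v\<bar> \<le> M" by blast
qed

lemma bounded_weights_inverse_sqrt_gram: "bounded_weights (\<lambda>j v. 1 / sqrt (gram j v))"
  unfolding bounded_weights_def
proof (intro allI impI)
  fix j assume "j < d"
  then obtain a b where a: "a > 0" and ab: "\<And>u. u \<in> V \<Longrightarrow> a \<le> gram j u \<and> gram j u \<le> b"
    using gram_bounds by blast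
  have "\<bar>1 / sqrt (gram j v)\<bar> \<le> 1 / sqrt a" if "v \<in> V" for v
    using a ab[OF that] by (simp add: frac_le)
  then show "\<exists>M. \<forall>v\<in>V. \<bar>1 / sqrt (gram j v)\<bar> \<le> M" by blast
qed

section \<open>Polar decomposition\<close>

definition modulus :: "nat \<Rightarrow> ((nat \<Rightarrow> 'a) \<Rightarrow> complex) \<Rightarrow> ((nat \<Rightarrow> 'a) \<Rightarrow> complex)" where
  "modulus j = mult_op (\<lambda>v. sqrt (gram j v))"

definition isometric_part ::
    "nat \<Rightarrow> ((nat \<Rightarrow> 'a) \<Rightarrow> complex) \<Rightarrow> ((nat \<Rightarrow> 'a) \<Rightarrow> complex)" where
  "isometric_part = weighted_shift (\<lambda>j v. 1 / sqrt (gram j v))"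

text \<open>The value at vertices without a parent in direction \<open>j\<close> is arbitrary; it only has to be positive.\<close>

definition isometric_weights :: "nat \<Rightarrow> (nat \<Rightarrow> 'a) \<Rightarrow> real" where
  "isometric_weights j w = (if has_parent j w then lam j w / sqrt (gram j (par j w)) else 1)"

lemma cauchy_dual_eq_weighted_shift:
  "j < d \<Longrightarrow> f \<in> l2space V \<Longrightarrow> S j (Inv j f) = weighted_shift (\<lambda>j v. 1 / gram j v) j f"
  by (simp add: weighted_shift_def Inv_eq_mult_op)

lemma commuting_cauchy_dual_iff:
  "commuting_tuple V d (\<lambda>j f. S j (Inv j f)) \<longleftrightarrow> commuting_tuple V d isometric_part"
proof -
  have "commuting_tuple V d (\<lambda>j f. S j (Inv j f))
      \<longleftrightarrow> commuting_tuple V d (weighted_shift (\<lambda>j v. 1 / gram j v))"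
    by (intro commuting_tuple_cong cauchy_dual_eq_weighted_shift)
      (simp_all add: cauchy_dual_eq_weighted_shift weighted_shift_l2space bounded_weights_inverse_gram)
  also have "\<dots> \<longleftrightarrow> weight_cocycle (\<lambda>j v. (1 / sqrt (gram j v))\<^sup>2)"
    using commuting_weighted_shift_iff[OF bounded_weights_inverse_gram]
    by (simp add: power_divide gram_nonneg)
  also have "\<dots> \<longleftrightarrow> commuting_tuple V d isometric_part"
    unfolding isometric_part_def
    using weight_cocycle_power2_iff commuting_weighted_shift_iff[OF bounded_weights_inverse_sqrt_gram]
      gram_pos by simp
  finally show ?thesis .
qed

lemma modulus_inverse:
  assumes j: "j < d" and f: "f \<in> l2space V"
  shows "mult_op (\<lambda>v. 1 / sqrt (gram j v)) (modulus j f) = f"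
    and "modulus j (mult_op (\<lambda>v. 1 / sqrt (gram j v)) f) = f"
proof -
  have "1 / sqrt (gram j v) * sqrt (gram j v) = 1" "sqrt (gram j v) * (1 / sqrt (gram j v)) = 1"
    if "v \<in> V" for v
    using gram_pos[OF j that] by simp_all
  then show "mult_op (\<lambda>v. 1 / sqrt (gram j v)) (modulus j f) = f"
    and "modulus j (mult_op (\<lambda>v. 1 / sqrt (gram j v)) f) = f"
    unfolding modulus_def mult_op_mult_op by (simp_all add: mult_op_one[OF _ f])
qed

lemma S_eq_isometric_part_modulus:
  "j < d \<Longrightarrow> f \<in> l2space V \<Longrightarrow> S j f = isometric_part j (modulus j f)"
  by (simp add: isometric_part_def weighted_shift_def modulus_inverse)

lemma bounded_op_modulus:
  assumes j: "j < d"
  shows "bounded_op V (modulus j)"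
proof -
  obtain a b where "\<And>u. u \<in> V \<Longrightarrow> a \<le> gram j u \<and> gram j u \<le> b"
    using gram_bounds[OF j] by blast
  then have "\<bar>sqrt (gram j v)\<bar> \<le> sqrt b" if "v \<in> V" for v
    using that gram_nonneg by simp
  then show ?thesis unfolding modulus_def by (rule bounded_op_mult_op)
qed

lemma diag_pos_inv_modulus:
  assumes j: "j < d"
  shows "diag_pos_inv V (modulus j)"
  unfolding diag_pos_inv_def
proof (intro conjI)
  show "bounded_op V (modulus j)" by (rule bounded_op_modulus[OF j])
  show "\<exists>\<delta>. \<forall>v\<in>V. modulus j (basis_vec v) = (\<lambda>w. \<delta> v * basis_vec v w)"
    by (rule exI[of _ "\<lambda>v. complex_of_real (sqrt (gram j v))"])
      (auto simp: modulus_def mult_op_def basis_vec_def)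
  show "\<forall>f\<in>l2space V. Im (l2inner V f (modulus j f)) = 0 \<and> Re (l2inner V f (modulus j f)) \<ge> 0"
    unfolding modulus_def using l2inner_mult_op_nonneg[of V "\<lambda>v. sqrt (gram j v)"] gram_nonneg
    by simp
  show "\<exists>Di. is_inverse V (modulus j) Di"
    unfolding is_inverse_def
    using bounded_op_mult_op_weights[OF bounded_weights_inverse_sqrt_gram j] modulus_inverse[OF j]
    by blast
qed

lemma bounded_op_isometric_part: "j < d \<Longrightarrow> bounded_op V (isometric_part j)"
  using bounded_op_comp[OF bounded_op_S bounded_op_mult_op_weights[OF bounded_weights_inverse_sqrt_gram]]
  by (simp add: isometric_part_def weighted_shift_def[abs_def])

lemma isometric_part_multishift: "is_multishift d Vt Et isometric_weights isometric_part"
  unfolding is_multishift_def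
proof (intro conjI allI impI ballI)
  fix j w assume j: "j < d" and w: "w \<in> V"
  show "isometric_weights j w > 0"
    using lam_pos[OF j w] gram_pos[OF j par_in_V[OF j w]] by (simp add: isometric_weights_def)
next
  fix j assume "j < d"
  then show "bounded_op V (isometric_part j)" by (rule bounded_op_isometric_part)
next
  fix j v assume j: "j < d" and v: "v \<in> V"
  show "isometric_part j (basis_vec v)
      = (\<lambda>w. if w \<in> prod_child d Vt Et j v then complex_of_real (isometric_weights j w) else 0)"
    unfolding isometric_part_def prod_child_iff[OF j v]
      weighted_shift_apply[OF bounded_weights_inverse_sqrt_gram j basis_vec_in_l2space[OF v]]
    by (auto simp: basis_vec_def isometric_weights_def)
qed

lemma Sa_isometric_part:
  assumes j: "j < d" and f: "f \<in> l2space V"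
  shows "Sa j (isometric_part j f) = modulus j f"
proof
  fix v
  show "Sa j (isometric_part j f) v = modulus j f v"
  proof (cases "v \<in> V")
    case True
    have "complex_of_real (gram j v) / complex_of_real (sqrt (gram j v)) = sqrt (gram j v)"
      by (simp only: of_real_divide[symmetric] real_div_sqrt[OF gram_nonneg])
    moreover have "Sa j (isometric_part j f) v
        = complex_of_real (gram j v) / complex_of_real (sqrt (gram j v)) * f v"
      using Sa_S_apply[OF j mult_op_l2space_bounded_weights[OF bounded_weights_inverse_sqrt_gram j f] True]
      by (simp add: isometric_part_def weighted_shift_def mult_op_def)
    ultimately show ?thesis by (simp add: modulus_def mult_op_def)
  next
    case False
    then show ?thesis
      using l2space_outside[OF f] l2space_outside[OF bounded_op_l2space[OF bounded_op_Sa[OF j]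
          bounded_op_l2space[OF bounded_op_isometric_part[OF j] f]]]
      by (simp add: modulus_def mult_op_def)
  qed
qed

lemma isometric_part_isometry:
  assumes j: "j < d"
  shows "\<exists>Ua. is_adjoint V (isometric_part j) Ua \<and> (\<forall>f\<in>l2space V. Ua (isometric_part j f) = f)"
proof (intro exI conjI)
  let ?m = "\<lambda>v. 1 / sqrt (gram j v)"
  show "is_adjoint V (isometric_part j) (\<lambda>f. mult_op ?m (Sa j f))"
    unfolding is_adjoint_def
  proof (intro conjI ballI)
    show "bounded_op V (\<lambda>f. mult_op ?m (Sa j f))"
      using bounded_op_comp[OF bounded_op_mult_op_weights[OF bounded_weights_inverse_sqrt_gram j]
          bounded_op_Sa[OF j]] by simp
    fix f g assume f: "f \<in> l2space V" and g: "g \<in> l2space V"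
    show "l2inner V (mult_op ?m (Sa j f)) g = l2inner V f (isometric_part j g)"
      unfolding l2inner_mult_op isometric_part_def weighted_shift_def
      by (rule l2inner_Sa[OF j f mult_op_l2space_bounded_weights[OF bounded_weights_inverse_sqrt_gram j g]])
  qed
  show "\<forall>f\<in>l2space V. mult_op ?m (Sa j (isometric_part j f)) = f"
    using Sa_isometric_part[OF j] modulus_inverse(1)[OF j] by simp
qed

lemma polar_decomp_canonical:
  assumes "commuting_tuple V d isometric_part"
  shows "polar_decomp d Vt Et S isometric_part isometric_weights modulus"
  unfolding polar_decomp_def toral_isometry_def
  using assms isometric_part_multishift isometric_part_isometry diag_pos_inv_modulus
    S_eq_isometric_part_modulus
  by (auto simp: commuting_tuple_def modulus_def mult_op_def ac_simps)

text \<open>Only \<open>U\<^sub>j\<^sup>* U\<^sub>j = I\<close>, the factorisation and the diagonal entries of \<open>D\<^sub>j\<close> enter here: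
  pairing \<open>S\<^sub>j f\<close> with \<open>S\<^sub>j e\<^sub>u = \<delta>\<^sub>u U\<^sub>j e\<^sub>u\<close> computes \<open>D\<^sub>j f = U\<^sub>j\<^sup>* S\<^sub>j f\<close> at \<open>u\<close>.\<close>

lemma polar_decomp_modulus_apply:
  assumes P: "polar_decomp d Vt Et S U \<theta> D" and j: "j < d"
    and f: "f \<in> l2space V" and u: "u \<in> V"
  shows "cnj (D j (basis_vec u) u) * D j f u = complex_of_real (gram j u) * f u"
proof -
  have U: "bounded_op V (U j)" and D: "diag_pos_inv V (D j)"
    and SUD: "\<And>g. g \<in> l2space V \<Longrightarrow> S j g = U j (D j g)"
    using P j unfolding polar_decomp_def is_multishift_def by blast+
  obtain Ua where Ua: "is_adjoint V (U j) Ua" and UaU: "\<And>g. g \<in> l2space V \<Longrightarrow> Ua (U j g) = g"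
    using P j unfolding polar_decomp_def toral_isometry_def by blast
  obtain \<delta> where \<delta>: "\<And>v. v \<in> V \<Longrightarrow> D j (basis_vec v) = (\<lambda>w. \<delta> v * basis_vec v w)"
    using D unfolding diag_pos_inv_def by blast
  have Df: "D j f \<in> l2space V"
    using D f unfolding diag_pos_inv_def by (blast intro: bounded_op_l2space)
  have e: "basis_vec u \<in> l2space V" by (rule basis_vec_in_l2space[OF u])
  have \<delta>u: "D j (basis_vec u) u = \<delta> u" using \<delta>[OF u] by (simp add: basis_vec_def)
  have S_basis: "S j (basis_vec u) = (\<lambda>w. \<delta> u * U j (basis_vec u) w)"
    using SUD[OF e] \<delta>[OF u] bounded_op_scale[OF U e] by simp
  have "D j f u = l2inner V (basis_vec u) (Ua (S j f))"
    using UaU[OF Df] SUD[OF f] l2inner_basis_vec_left[OF u] by simp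
  also have "\<dots> = cnj (l2inner V (Ua (S j f)) (basis_vec u))" by (rule l2inner_cnj_commute)
  also have "\<dots> = cnj (l2inner V (S j f) (U j (basis_vec u)))"
    using Ua bounded_op_l2space[OF bounded_op_S[OF j] f] e unfolding is_adjoint_def by simp
  finally have "cnj (\<delta> u) * D j f u = cnj (l2inner V (S j f) (S j (basis_vec u)))"
    unfolding S_basis l2inner_scale_right by simp
  then show ?thesis using l2inner_S_S_basis_vec[OF j f u] \<delta>u by simp
qed

lemma polar_decomp_modulus_basis_vec:
  assumes P: "polar_decomp d Vt Et S U \<theta> D" and j: "j < d" and u: "u \<in> V"
  shows "D j (basis_vec u) u = sqrt (gram j u)"
proof -
  let ?\<delta> = "D j (basis_vec u) u"
  have "Im (l2inner V (basis_vec u) (D j (basis_vec u))) = 0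
      \<and> Re (l2inner V (basis_vec u) (D j (basis_vec u))) \<ge> 0"
    using P j basis_vec_in_l2space[OF u] unfolding polar_decomp_def diag_pos_inv_def by blast
  then obtain r where r: "?\<delta> = complex_of_real r" "r \<ge> 0"
    by (simp add: l2inner_basis_vec_left[OF u] complex_eq_iff)
  have "cnj ?\<delta> * ?\<delta> = complex_of_real (gram j u)"
    using polar_decomp_modulus_apply[OF P j basis_vec_in_l2space[OF u] u] by (simp add: basis_vec_def)
  then have "r\<^sup>2 = gram j u"
    unfolding r(1) by (simp add: power2_eq_square flip: of_real_mult)
  then show ?thesis using real_sqrt_unique[OF _ r(2)] r(1) by simp
qed

lemma polar_decomp_modulus:
  assumes P: "polar_decomp d Vt Et S U \<theta> D" and j: "j < d" and f: "f \<in> l2space V"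
  shows "D j f = modulus j f"
proof
  fix u
  show "D j f u = modulus j f u"
  proof (cases "u \<in> V")
    case True
    have "sqrt (gram j u) > 0" using gram_pos[OF j True] by simp
    moreover have "sqrt (gram j u) * D j f u = gram j u * f u"
      using polar_decomp_modulus_apply[OF P j f True] polar_decomp_modulus_basis_vec[OF P j True]
      by simp
    ultimately have "D j f u = gram j u / sqrt (gram j u) * f u"
      by (simp add: field_simps flip: of_real_mult)
    then show ?thesis
      using real_div_sqrt[OF gram_nonneg] by (simp add: modulus_def mult_op_def flip: of_real_divide)
  next
    case False
    have "bounded_op V (D j)"
      using P j unfolding polar_decomp_def diag_pos_inv_def by blast
    then show ?thesis
      using False l2space_outside[OF f] l2space_outside[OF bounded_op_l2space[OF _ f]]
      by (simp add: modulus_def mult_op_def)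
  qed
qed

lemma polar_decomp_unique:
  assumes P: "polar_decomp d Vt Et S U \<theta> D" and j: "j < d" and f: "f \<in> l2space V"
  shows "U j f = isometric_part j f \<and> D j f = modulus j f"
proof
  let ?g = "mult_op (\<lambda>v. 1 / sqrt (gram j v)) f"
  have g: "?g \<in> l2space V"
    by (rule mult_op_l2space_bounded_weights[OF bounded_weights_inverse_sqrt_gram j f])
  have "isometric_part j f = U j (D j ?g)"
    using P j g unfolding isometric_part_def weighted_shift_def polar_decomp_def by blast
  also have "\<dots> = U j f"
    using polar_decomp_modulus[OF P j g] modulus_inverse(2)[OF j f] by simp
  finally show "U j f = isometric_part j f" ..
  show "D j f = modulus j f" by (rule polar_decomp_modulus[OF P j f])
qed

end

theorem mainTheorem16:
  fixes d :: nat
    and Vt :: "nat \<Rightarrow> 'a set" and Et :: "nat \<Rightarrow> ('a \<times> 'a) set"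
    and lam :: "nat \<Rightarrow> (nat \<Rightarrow> 'a) \<Rightarrow> real"
    and S Sa Inv :: "nat \<Rightarrow> ((nat \<Rightarrow> 'a) \<Rightarrow> complex) \<Rightarrow> ((nat \<Rightarrow> 'a) \<Rightarrow> complex)"
  assumes "d \<ge> 1"
    and "\<forall>j<d. rooted_directed_tree (Vt j) (Et j) \<and> leafless (Vt j) (Et j) \<and> countable (Vt j)"
    and "is_multishift d Vt Et lam S"
    and "commuting_tuple (prod_vertices d Vt) d S"
    and "\<forall>j<d. is_adjoint (prod_vertices d Vt) (S j) (Sa j)"
    and "\<forall>j<d. is_inverse (prod_vertices d Vt) (\<lambda>f. Sa j (S j f)) (Inv j)"
  shows "(commuting_tuple (prod_vertices d Vt) d (\<lambda>j f. S j (Inv j f)) \<longleftrightarrow>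
            (\<exists>U \<theta> D. polar_decomp d Vt Et S U \<theta> D))
       \<and> (\<forall>U \<theta> D U' \<theta>' D'. polar_decomp d Vt Et S U \<theta> D \<and> polar_decomp d Vt Et S U' \<theta>' D' \<longrightarrow>
            (\<forall>j<d. \<forall>f\<in>l2space (prod_vertices d Vt). U j f = U' j f \<and> D j f = D' j f))"
proof -
  interpret commuting_multishift d Vt Et lam S Sa Inv
    using assms(2-6) by unfold_locales blast+
  have "commuting_tuple V d (\<lambda>j f. S j (Inv j f)) \<longleftrightarrow> (\<exists>U \<theta> D. polar_decomp d Vt Et S U \<theta> D)"
  proof
    assume "commuting_tuple V d (\<lambda>j f. S j (Inv j f))"
    then show "\<exists>U \<theta> D. polar_decomp d Vt Et S U \<theta> D"
      using commuting_cauchy_dual_iff polar_decomp_canonical by blast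
  next
    assume "\<exists>U \<theta> D. polar_decomp d Vt Et S U \<theta> D"
    then obtain U \<theta> D where P: "polar_decomp d Vt Et S U \<theta> D" by blast
    then have "commuting_tuple V d U"
      unfolding polar_decomp_def toral_isometry_def by blast
    moreover have "commuting_tuple V d U \<longleftrightarrow> commuting_tuple V d isometric_part"
      using polar_decomp_unique[OF P] bounded_op_l2space[OF bounded_op_isometric_part]
      by (intro commuting_tuple_cong) simp_all
    ultimately show "commuting_tuple V d (\<lambda>j f. S j (Inv j f))"
      using commuting_cauchy_dual_iff by simp
  qed
  moreover have "U j f = U' j f \<and> D j f = D' j f"
    if "polar_decomp d Vt Et S U \<theta> D \<and> polar_decomp d Vt Et S U' \<theta>' D'" "j < d" "f \<in> l2space V"
    for U \<theta> D U' \<theta>' D' j f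
    using polar_decomp_unique[OF conjunct1[OF that(1)] that(2,3)]
      polar_decomp_unique[OF conjunct2[OF that(1)] that(2,3)] by simp
  ultimately show ?thesis by blast
qed

end
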